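(* If a liner $X$ is $\kappa$-parallel for some finite nonzero cardinal $\kappa$, then for every triangle $abc$ in $X$ there exists a point $d\in X$ such that $abcd$ is a parallelogram.
   Context: A liner is a set $X$ of points with a family of subsets called lines such that any two distinct points lie in a unique line and every line contains at least two points. For distinct $x,y$, $\overline{xy}$ is the line through them and $\overline{xx}:=\{x\}$. A set is flat if it contains $\overline{xy}$ for all its distinct points; $\overline A$ is the smallest flat containing $A$; the rank $\|A\|$ is the smallest cardinality of $B\subseteq X$ with $A\subseteq\overline B$; a plane is a flat of rank 3. $X$ is $\kappa$-parallel if for every plane $P$, line $L\subseteq P$ and point $x\in P\setminus L$ there exist exactly $\kappa$ lines $\Lambda$ with $x\in\Lambda\subseteq P\setminus L$. A triangle is a triple $abc\in X^3$ with $\|\{a,b,c\}\|=3$. A flat $A$ is subparallel to a flat $B$ if $A\subseteq\overline{\{a\}\cup B}$ for every $a\in A$; $A\parallel B$ means each is subparallel to the other. A parallelogram is a quadruple $abcd\in X^4$ with $\overline{ab}\parallel\overline{cd}\ne\overline{ab}$ and $\overline{bc}\parallel\overline{ad}\ne\overline{bc}$. *)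

theory Defs
  imports Main
begin

definition liner :: "'a set \<Rightarrow> 'a set set \<Rightarrow> bool" where
  "liner X L \<longleftrightarrow>
     (\<forall>l\<in>L. l \<subseteq> X \<and> (\<exists>x y. x \<noteq> y \<and> x \<in> l \<and> y \<in> l)) \<and>
     (\<forall>x\<in>X. \<forall>y\<in>X. x \<noteq> y \<longrightarrow> (\<exists>!l. l \<in> L \<and> x \<in> l \<and> y \<in> l))"

definition line_through :: "'a set set \<Rightarrow> 'a \<Rightarrow> 'a \<Rightarrow> 'a set" where
  "line_through L x y = (if x = y then {x} else (THE l. l \<in> L \<and> x \<in> l \<and> y \<in> l))"

definition flat :: "'a set \<Rightarrow> 'a set set \<Rightarrow> 'a set \<Rightarrow> bool" where
  "flat X L A \<longleftrightarrow> A \<subseteq> X \<and> (\<forall>x\<in>A. \<forall>y\<in>A. line_through L x y \<subseteq> A)"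

definition flat_hull :: "'a set \<Rightarrow> 'a set set \<Rightarrow> 'a set \<Rightarrow> 'a set" where
  "flat_hull X L A = \<Inter>{F. flat X L F \<and> A \<subseteq> F}"

definition has_rank :: "'a set \<Rightarrow> 'a set set \<Rightarrow> 'a set \<Rightarrow> nat \<Rightarrow> bool" where
  "has_rank X L A n \<longleftrightarrow>
     (\<exists>B. B \<subseteq> X \<and> finite B \<and> card B = n \<and> A \<subseteq> flat_hull X L B) \<and>
     (\<forall>B. B \<subseteq> X \<and> finite B \<and> A \<subseteq> flat_hull X L B \<longrightarrow> n \<le> card B)"

definition plane :: "'a set \<Rightarrow> 'a set set \<Rightarrow> 'a set \<Rightarrow> bool" where
  "plane X L P \<longleftrightarrow> flat X L P \<and> has_rank X L P 3"

definition k_parallel :: "'a set \<Rightarrow> 'a set set \<Rightarrow> nat \<Rightarrow> bool" where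
  "k_parallel X L \<kappa> \<longleftrightarrow>
     (\<forall>P Ln x. plane X L P \<and> Ln \<in> L \<and> Ln \<subseteq> P \<and> x \<in> P - Ln \<longrightarrow>
        finite {\<Lambda>. \<Lambda> \<in> L \<and> x \<in> \<Lambda> \<and> \<Lambda> \<subseteq> P - Ln} \<and>
        card {\<Lambda>. \<Lambda> \<in> L \<and> x \<in> \<Lambda> \<and> \<Lambda> \<subseteq> P - Ln} = \<kappa>)"

definition triangle :: "'a set \<Rightarrow> 'a set set \<Rightarrow> 'a \<Rightarrow> 'a \<Rightarrow> 'a \<Rightarrow> bool" where
  "triangle X L a b c \<longleftrightarrow> a \<in> X \<and> b \<in> X \<and> c \<in> X \<and> has_rank X L {a, b, c} 3"

definition subparallel :: "'a set \<Rightarrow> 'a set set \<Rightarrow> 'a set \<Rightarrow> 'a set \<Rightarrow> bool" where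
  "subparallel X L A B \<longleftrightarrow> (\<forall>a\<in>A. A \<subseteq> flat_hull X L (insert a B))"

definition parallel :: "'a set \<Rightarrow> 'a set set \<Rightarrow> 'a set \<Rightarrow> 'a set \<Rightarrow> bool" where
  "parallel X L A B \<longleftrightarrow> subparallel X L A B \<and> subparallel X L B A"

definition parallelogram :: "'a set \<Rightarrow> 'a set set \<Rightarrow> 'a \<Rightarrow> 'a \<Rightarrow> 'a \<Rightarrow> 'a \<Rightarrow> bool" where
  "parallelogram X L a b c d \<longleftrightarrow>
     a \<in> X \<and> b \<in> X \<and> c \<in> X \<and> d \<in> X \<and>
     parallel X L (line_through L a b) (line_through L c d) \<and>
     line_through L c d \<noteq> line_through L a b \<and>
     parallel X L (line_through L b c) (line_through L a d) \<and>
     line_through L b c \<noteq> line_through L a d"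

end

theory Submission
  imports Defs
begin

text \<open>Let \<open>P\<close> be the plane of the triangle \<open>abc\<close>. The heart of the proof is that in a
  \<open>\<kappa>\<close>-parallel liner with \<open>\<kappa>\<close> finite, two disjoint lines \<open>\<Lambda>\<close>, \<open>Ln\<close> of a plane are parallel:
  for \<open>x \<in> \<Lambda>\<close>, the plane \<open>F\<close> spanned by \<open>x\<close> and \<open>Ln\<close> lies in \<open>P\<close>, and the lines through \<open>x\<close>
  missing \<open>Ln\<close> inside \<open>F\<close> form a subset of those inside \<open>P\<close>; both sets have exactly \<open>\<kappa>\<close>
  elements, so they coincide and \<open>\<Lambda> \<subseteq> F\<close>.
  Since \<open>\<kappa> > 0\<close> there is a line \<open>\<Lambda>\<close> through \<open>c\<close> in \<open>P\<close> missing \<open>ab\<close>. The line \<open>ab\<close> is one of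
  the \<open>\<kappa>\<close> lines through \<open>a\<close> missing \<open>\<Lambda>\<close> but not one of the \<open>\<kappa>\<close> lines through \<open>a\<close> missing
  \<open>bc\<close>; so some line \<open>M\<close> through \<open>a\<close> misses \<open>bc\<close> but meets \<open>\<Lambda>\<close>, in the fourth vertex \<open>d\<close>.\<close>

lemma subset_flat_hull: "A \<subseteq> flat_hull X L A"
  unfolding flat_hull_def by blast

lemma flat_hull_least: "flat X L F \<Longrightarrow> A \<subseteq> F \<Longrightarrow> flat_hull X L A \<subseteq> F"
  unfolding flat_hull_def by blast

lemma flat_hull_mono: "A \<subseteq> B \<Longrightarrow> flat_hull X L A \<subseteq> flat_hull X L B"
  unfolding flat_hull_def by blast

lemma flat_line_through_subset: "flat X L F \<Longrightarrow> a \<in> F \<Longrightarrow> b \<in> F \<Longrightarrow> line_through L a b \<subseteq> F"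
  unfolding flat_def by blast

lemma has_rank_le_card:
  "has_rank X L A n \<Longrightarrow> B \<subseteq> X \<Longrightarrow> finite B \<Longrightarrow> A \<subseteq> flat_hull X L B \<Longrightarrow> n \<le> card B"
  unfolding has_rank_def by blast

lemma card_le_2_subset_pair:
  assumes "finite B" "card B \<le> 2" "B \<subseteq> X" "x \<in> X"
  shows "\<exists>p\<in>X. \<exists>q\<in>X. B \<subseteq> {p, q}"
proof -
  consider "card B = 0" | "card B = 1" | "card B = 2"
    using assms(2) by linarith
  then show ?thesis
  proof cases
    case 1
    then show ?thesis using assms by auto
  next
    case 2
    then obtain p where "B = {p}"
      by (rule card_1_singletonE)
    then show ?thesis using assms by auto
  next
    case 3
    then show ?thesis using assms by (auto simp: card_2_iff)
  qed
qed

locale liner_space =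
  fixes X :: "'a set" and L :: "'a set set"
  assumes liner: "liner X L"
begin

lemma line_subset: "l \<in> L \<Longrightarrow> l \<subseteq> X"
  using liner unfolding liner_def by simp

lemma line_has_two_points: "l \<in> L \<Longrightarrow> \<exists>x y. x \<noteq> y \<and> x \<in> l \<and> y \<in> l"
  using liner unfolding liner_def by simp

lemma unique_line: "x \<in> X \<Longrightarrow> y \<in> X \<Longrightarrow> x \<noteq> y \<Longrightarrow> \<exists>!l. l \<in> L \<and> x \<in> l \<and> y \<in> l"
  using liner unfolding liner_def by simp

lemma line_through_spec:
  assumes "x \<in> X" "y \<in> X" "x \<noteq> y"
  shows "line_through L x y \<in> L \<and> x \<in> line_through L x y \<and> y \<in> line_through L x y"
proof -
  from theI'[OF unique_line[OF assms]] show ?thesis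
    using assms(3) unfolding line_through_def by simp
qed

lemma line_through_in_lines: "x \<in> X \<Longrightarrow> y \<in> X \<Longrightarrow> x \<noteq> y \<Longrightarrow> line_through L x y \<in> L"
  using line_through_spec by blast

lemma line_through_endpoints:
  "x \<in> X \<Longrightarrow> y \<in> X \<Longrightarrow> x \<in> line_through L x y \<and> y \<in> line_through L x y"
  using line_through_spec by (cases "x = y") (auto simp: line_through_def)

lemma line_eq_line_through:
  assumes "l \<in> L" "x \<in> l" "y \<in> l" "x \<noteq> y"
  shows "l = line_through L x y"
proof -
  have "x \<in> X" "y \<in> X"
    using assms line_subset by auto
  then show ?thesis
    using unique_line assms line_through_spec by blast
qed

lemma line_through_subset:
  assumes "x \<in> X" "y \<in> X"
  shows "line_through L x y \<subseteq> X"
proof (cases "x = y")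
  case True
  then show ?thesis using assms by (simp add: line_through_def)
next
  case False
  then show ?thesis using assms line_through_in_lines line_subset by blast
qed

lemma flat_space: "flat X L X"
  unfolding flat_def using line_through_subset by blast

lemma flat_line:
  assumes "l \<in> L"
  shows "flat X L l"
  unfolding flat_def
proof (intro conjI ballI)
  show "l \<subseteq> X"
    using line_subset assms .
  fix x y
  assume "x \<in> l" "y \<in> l"
  then show "line_through L x y \<subseteq> l"
  proof (cases "x = y")
    case False
    then show ?thesis using line_eq_line_through[OF assms \<open>x \<in> l\<close> \<open>y \<in> l\<close>] by simp
  qed (simp add: line_through_def)
qed

lemma flat_line_through:
  assumes "x \<in> X" "y \<in> X"
  shows "flat X L (line_through L x y)"
proof (cases "x = y")
  case True
  then show ?thesis using assms by (simp add: flat_def line_through_def)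
next
  case False
  then show ?thesis using assms line_through_in_lines flat_line by blast
qed

lemma flat_flat_hull:
  assumes "A \<subseteq> X"
  shows "flat X L (flat_hull X L A)"
proof -
  have "flat_hull X L A \<subseteq> X"
    using flat_hull_least[OF flat_space assms] .
  moreover have "line_through L x y \<subseteq> flat_hull X L A"
    if "x \<in> flat_hull X L A" "y \<in> flat_hull X L A" for x y
    unfolding flat_hull_def
  proof (rule Inter_greatest)
    fix F
    assume "F \<in> {F. flat X L F \<and> A \<subseteq> F}"
    with that have "flat X L F" "x \<in> F" "y \<in> F"
      unfolding flat_hull_def by auto
    then show "line_through L x y \<subseteq> F"
      by (rule flat_line_through_subset)
  qed
  ultimately show ?thesis
    unfolding flat_def by blast
qed

lemma line_through_subset_flat_hull:
  assumes "x \<in> X" "y \<in> X"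
  shows "line_through L x y \<subseteq> flat_hull X L {x, y}"
proof (rule flat_line_through_subset)
  show "flat X L (flat_hull X L {x, y})"
    using assms by (intro flat_flat_hull) auto
qed (use subset_flat_hull[of "{x, y}"] in auto)

lemma flat_hull_pair_subset_line_through:
  assumes "x \<in> X" "y \<in> X"
  shows "flat_hull X L {x, y} \<subseteq> line_through L x y"
  by (rule flat_hull_least[OF flat_line_through[OF assms]]) (use line_through_endpoints[OF assms] in auto)

text \<open>A set of at most two points spans at most a line, so three non-collinear points cannot
  be spanned by fewer than three.\<close>

lemma triangle_iff:
  "triangle X L a b c \<longleftrightarrow> a \<in> X \<and> b \<in> X \<and> c \<in> X \<and> a \<noteq> b \<and> c \<notin> line_through L a b"
proof (intro iffI)
  assume abc: "triangle X L a b c"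
  then have points: "a \<in> X" "b \<in> X" "c \<in> X" and rank: "has_rank X L {a, b, c} 3"
    unfolding triangle_def by auto
  have not_in_pair_hull: "\<not> {a, b, c} \<subseteq> flat_hull X L {p, q}" if "p \<in> X" "q \<in> X" for p q
  proof
    assume "{a, b, c} \<subseteq> flat_hull X L {p, q}"
    then have "3 \<le> card {p, q}"
      using has_rank_le_card[OF rank] that by simp
    moreover have "card {p, q} \<le> 2"
      by (simp add: card_insert_if)
    ultimately show False
      by linarith
  qed
  have "a \<noteq> b"
    using not_in_pair_hull[OF points(1,3)] subset_flat_hull[of "{a, c}"] by auto
  moreover have "c \<notin> line_through L a b"
    using not_in_pair_hull[OF points(1,2)] line_through_subset_flat_hull[OF points(1,2)]
      subset_flat_hull[of "{a, b}"] by auto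
  ultimately show "a \<in> X \<and> b \<in> X \<and> c \<in> X \<and> a \<noteq> b \<and> c \<notin> line_through L a b"
    using points by blast
next
  assume "a \<in> X \<and> b \<in> X \<and> c \<in> X \<and> a \<noteq> b \<and> c \<notin> line_through L a b"
  then have points: "a \<in> X" "b \<in> X" "c \<in> X" and "a \<noteq> b"
    and c: "c \<notin> line_through L a b"
    by auto
  have "c \<noteq> a" "c \<noteq> b"
    using c line_through_endpoints[OF points(1,2)] by auto
  with \<open>a \<noteq> b\<close> have distinct: "card {a, b, c} = 3"
    by simp
  have lower: "3 \<le> card B" if B: "B \<subseteq> X" "finite B" "{a, b, c} \<subseteq> flat_hull X L B" for B
  proof (rule ccontr)
    assume "\<not> 3 \<le> card B"
    then have "card B \<le> 2"
      by linarith
    then obtain p q where pq: "p \<in> X" "q \<in> X" "B \<subseteq> {p, q}"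
      using card_le_2_subset_pair[OF B(2) _ B(1) points(1)] by blast
    note B(3)
    also have "flat_hull X L B \<subseteq> flat_hull X L {p, q}"
      using pq(3) by (rule flat_hull_mono)
    also have "\<dots> \<subseteq> line_through L p q"
      using pq(1,2) by (rule flat_hull_pair_subset_line_through)
    finally have abc_pq: "{a, b, c} \<subseteq> line_through L p q" .
    then have "p \<noteq> q"
      using \<open>a \<noteq> b\<close> by (auto simp: line_through_def)
    with abc_pq have "line_through L p q = line_through L a b"
      using line_eq_line_through[OF line_through_in_lines[OF pq(1,2)]] \<open>a \<noteq> b\<close> by simp
    with abc_pq c show False
      by simp
  qed
  have "{a, b, c} \<subseteq> X" "{a, b, c} \<subseteq> flat_hull X L {a, b, c}"
    using points subset_flat_hull[of "{a, b, c}"] by auto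
  with distinct lower show "triangle X L a b c"
    unfolding triangle_def has_rank_def by (meson finite.emptyI finite.insertI insert_subset)
qed

lemma triangle_rotate: "triangle X L a b c \<Longrightarrow> triangle X L b c a"
  unfolding triangle_def by (simp add: insert_commute)

lemma has_rank_flat_hull:
  assumes rank: "has_rank X L A n"
  shows "has_rank X L (flat_hull X L A) n"
  unfolding has_rank_def
proof (intro conjI allI impI)
  obtain B where B: "B \<subseteq> X" "finite B" "card B = n" "A \<subseteq> flat_hull X L B"
    using rank unfolding has_rank_def by blast
  then have "flat_hull X L A \<subseteq> flat_hull X L B"
    using flat_hull_least[OF flat_flat_hull] by blast
  with B show "\<exists>B. B \<subseteq> X \<and> finite B \<and> card B = n \<and> flat_hull X L A \<subseteq> flat_hull X L B"
    by blast
next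
  fix B
  assume B: "B \<subseteq> X \<and> finite B \<and> flat_hull X L A \<subseteq> flat_hull X L B"
  then have "A \<subseteq> flat_hull X L B"
    using subset_flat_hull[of A] by (meson subset_trans)
  with B show "n \<le> card B"
    using has_rank_le_card[OF rank] by simp
qed

lemma plane_flat_hull_triangle:
  assumes "triangle X L a b c"
  shows "plane X L (flat_hull X L {a, b, c})"
  using assms flat_flat_hull has_rank_flat_hull unfolding triangle_def plane_def by simp

lemma line_through_in_flat:
  assumes "flat X L F" "x \<in> F" "y \<in> F" "x \<noteq> y"
  shows "line_through L x y \<in> L" "x \<in> line_through L x y" "y \<in> line_through L x y"
    and "line_through L x y \<subseteq> F"
proof -
  have "x \<in> X" "y \<in> X"
    using assms unfolding flat_def by auto
  then show "line_through L x y \<in> L" "x \<in> line_through L x y" "y \<in> line_through L x y"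
    using line_through_spec assms(4) by auto
  show "line_through L x y \<subseteq> F"
    using assms(1-3) by (rule flat_line_through_subset)
qed

definition disjoint_lines :: "'a set \<Rightarrow> 'a set \<Rightarrow> 'a \<Rightarrow> 'a set set" where
  "disjoint_lines P l x = {\<Lambda>. \<Lambda> \<in> L \<and> x \<in> \<Lambda> \<and> \<Lambda> \<subseteq> P - l}"

end

locale k_parallel_liner = liner_space +
  fixes \<kappa> :: nat
  assumes k_parallel: "k_parallel X L \<kappa>"
begin

lemma card_disjoint_lines:
  assumes "plane X L P" "l \<in> L" "l \<subseteq> P" "x \<in> P - l"
  shows "finite (disjoint_lines P l x)" "card (disjoint_lines P l x) = \<kappa>"
  using k_parallel assms unfolding k_parallel_def disjoint_lines_def by auto

lemma disjoint_lines_nonempty: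
  assumes "0 < \<kappa>" "plane X L P" "l \<in> L" "l \<subseteq> P" "x \<in> P - l"
  shows "disjoint_lines P l x \<noteq> {}"
  using card_disjoint_lines(2)[OF assms(2-)] assms(1) by auto

lemma disjoint_lines_plane_mono:
  assumes F: "plane X L F" and P: "plane X L P" and "F \<subseteq> P" "l \<in> L" "l \<subseteq> F" "x \<in> F - l"
  shows "disjoint_lines P l x = disjoint_lines F l x"
proof -
  have sub: "disjoint_lines F l x \<subseteq> disjoint_lines P l x"
    using \<open>F \<subseteq> P\<close> unfolding disjoint_lines_def by blast
  have "l \<subseteq> P" "x \<in> P - l"
    using assms(3-) by auto
  note P_lines = card_disjoint_lines[OF P \<open>l \<in> L\<close> this]
  note F_lines = card_disjoint_lines[OF F assms(4-)]
  show ?thesis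
    using card_subset_eq[OF P_lines(1) sub] P_lines(2) F_lines(2) by simp
qed

lemma ex_line_missing_and_meeting:
  assumes P: "plane X L P" and l: "l \<in> L" "l \<subseteq> P" and m: "m \<in> L" "m \<subseteq> P"
    and x: "x \<in> P - l" "x \<in> P - m"
    and n: "n \<in> L" "x \<in> n" "n \<subseteq> P" "n \<inter> l = {}" "n \<inter> m \<noteq> {}"
  shows "\<exists>M\<in>L. x \<in> M \<and> M \<subseteq> P \<and> M \<inter> m = {} \<and> M \<inter> l \<noteq> {}"
proof -
  have "n \<in> disjoint_lines P l x" "n \<notin> disjoint_lines P m x"
    using n unfolding disjoint_lines_def by auto
  moreover note l_lines = card_disjoint_lines[OF P l x(1)]
  moreover note m_lines = card_disjoint_lines[OF P m x(2)]
  ultimately have "\<not> disjoint_lines P m x \<subseteq> disjoint_lines P l x"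
    using card_subset_eq[OF l_lines(1)] by metis
  then show ?thesis
    unfolding disjoint_lines_def by blast
qed

lemma disjoint_line_subset_flat_hull:
  assumes P: "plane X L P" and l: "l \<in> L" "l \<subseteq> P"
    and \<Lambda>: "\<Lambda> \<in> L" "\<Lambda> \<subseteq> P" "\<Lambda> \<inter> l = {}" and x: "x \<in> \<Lambda>"
  shows "\<Lambda> \<subseteq> flat_hull X L (insert x l)"
proof -
  obtain p q where pq: "p \<in> l" "q \<in> l" "p \<noteq> q"
    using line_has_two_points[OF l(1)] by blast
  have l_eq: "l = line_through L p q"
    using line_eq_line_through[OF l(1) pq] .
  have points: "p \<in> X" "q \<in> X" "x \<in> X"
    using x pq \<Lambda>(1) l(1) line_subset by auto
  have "x \<notin> l"
    using x \<Lambda>(3) by blast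
  define F where "F = flat_hull X L {p, q, x}"
  have "triangle X L p q x"
    unfolding triangle_iff using points pq(3) \<open>x \<notin> l\<close> l_eq by simp
  then have F_plane: "plane X L F"
    unfolding F_def by (rule plane_flat_hull_triangle)
  have pqx_F: "{p, q, x} \<subseteq> F"
    unfolding F_def by (rule subset_flat_hull)
  have l_F: "l \<subseteq> F"
    unfolding l_eq using F_plane pqx_F by (intro flat_line_through_subset) (auto simp: plane_def)
  have F_P: "F \<subseteq> P"
    unfolding F_def using P pq x l \<Lambda> by (intro flat_hull_least) (auto simp: plane_def)
  have "\<Lambda> \<in> disjoint_lines P l x"
    using \<Lambda> x unfolding disjoint_lines_def by blast
  also have "disjoint_lines P l x = disjoint_lines F l x"
    using disjoint_lines_plane_mono[OF F_plane P F_P l(1) l_F] pqx_F \<open>x \<notin> l\<close> by simp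
  finally have "\<Lambda> \<subseteq> F"
    unfolding disjoint_lines_def by blast
  also have "F \<subseteq> flat_hull X L (insert x l)"
    unfolding F_def using pq by (intro flat_hull_mono) auto
  finally show ?thesis .
qed

lemma disjoint_lines_parallel:
  assumes "plane X L P" "l \<in> L" "l \<subseteq> P" "m \<in> L" "m \<subseteq> P" "l \<inter> m = {}"
  shows "parallel X L l m"
proof -
  have "m \<inter> l = {}"
    using assms(6) by blast
  then show ?thesis
    unfolding parallel_def subparallel_def
    using disjoint_line_subset_flat_hull[OF assms(1) assms(4,5) assms(2,3) assms(6)]
      disjoint_line_subset_flat_hull[OF assms(1) assms(2,3) assms(4,5)]
    by blast
qed
lemma parallelogramI:
  assumes P: "plane X L P" and points: "a \<in> P" "b \<in> P" "c \<in> P" "a \<noteq> b" "b \<noteq> c"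
    and \<Lambda>: "\<Lambda> \<in> L" "c \<in> \<Lambda>" "\<Lambda> \<subseteq> P" "\<Lambda> \<inter> line_through L a b = {}"
    and M: "M \<in> L" "a \<in> M" "M \<subseteq> P" "M \<inter> line_through L b c = {}"
    and d: "d \<in> \<Lambda>" "d \<in> M"
  shows "parallelogram X L a b c d"
proof -
  have "flat X L P"
    using P unfolding plane_def by simp
  note ab = line_through_in_flat[OF this points(1,2,4)]
    and bc = line_through_in_flat[OF this points(2,3,5)]
  have "d \<noteq> c" "d \<noteq> a"
    using d M(4) bc(3) \<Lambda>(4) ab(2) by auto
  then have "line_through L c d = \<Lambda>" "line_through L a d = M"
    using line_eq_line_through \<Lambda>(1,2) M(1,2) d by metis+
  moreover have "parallel X L (line_through L a b) \<Lambda>" "parallel X L (line_through L b c) M"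
    using disjoint_lines_parallel[OF P] ab(1,4) bc(1,4) \<Lambda> M by (auto simp: Int_commute)
  moreover have "\<Lambda> \<noteq> line_through L a b" "line_through L b c \<noteq> M"
    using \<Lambda>(2,4) M(2,4) by auto
  moreover have "a \<in> X" "b \<in> X" "c \<in> X" "d \<in> X"
    using points d \<open>flat X L P\<close> \<Lambda>(3) unfolding flat_def by auto
  ultimately show ?thesis
    unfolding parallelogram_def by simp
qed

lemma ex_fourth_vertex:
  assumes \<kappa>: "0 < \<kappa>" and abc: "triangle X L a b c"
  shows "\<exists>d\<in>X. parallelogram X L a b c d"
proof -
  define P where "P = flat_hull X L {a, b, c}"
  have P: "plane X L P"
    unfolding P_def using abc by (rule plane_flat_hull_triangle)
  have abc_P: "a \<in> P" "b \<in> P" "c \<in> P"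
    unfolding P_def using subset_flat_hull[of "{a, b, c}"] by auto
  have tri: "a \<noteq> b" "b \<noteq> c" "c \<notin> line_through L a b" "a \<notin> line_through L b c"
    using abc triangle_rotate[OF abc] unfolding triangle_iff by auto
  have "flat X L P"
    using P unfolding plane_def by simp
  note ab = line_through_in_flat[OF this abc_P(1,2) tri(1)]
    and bc = line_through_in_flat[OF this abc_P(2,3) tri(2)]
  obtain \<Lambda> where \<Lambda>: "\<Lambda> \<in> L" "c \<in> \<Lambda>" "\<Lambda> \<subseteq> P" "\<Lambda> \<inter> line_through L a b = {}"
    using disjoint_lines_nonempty[OF \<kappa> P ab(1,4)] abc_P(3) tri(3)
    unfolding disjoint_lines_def by blast
  have "a \<in> P - \<Lambda>" "a \<in> P - line_through L b c"
    using abc_P(1) ab(2) \<Lambda>(4) tri(4) by auto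
  moreover have "line_through L a b \<inter> \<Lambda> = {}" "line_through L a b \<inter> line_through L b c \<noteq> {}"
    using \<Lambda>(4) ab(3) bc(2) by auto
  ultimately obtain M where M: "M \<in> L" "a \<in> M" "M \<subseteq> P" "M \<inter> line_through L b c = {}"
    and "M \<inter> \<Lambda> \<noteq> {}"
    using ex_line_missing_and_meeting[OF P \<Lambda>(1,3) bc(1,4) _ _ ab(1,2,4)] by blast
  then obtain d where d: "d \<in> \<Lambda>" "d \<in> M"
    by blast
  have "parallelogram X L a b c d"
    using parallelogramI[OF P abc_P tri(1,2) \<Lambda> M d] .
  moreover have "d \<in> X"
    using d(1) \<Lambda>(1) line_subset by blast
  ultimately show ?thesis
    by blast
qed

end

theorem proposition6p7p7:
  fixes X :: "'a set" and L :: "'a set set" and \<kappa> :: nat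
  assumes "liner X L"
    and "0 < \<kappa>"
    and "k_parallel X L \<kappa>"
  shows "\<forall>a b c. triangle X L a b c \<longrightarrow> (\<exists>d\<in>X. parallelogram X L a b c d)"
proof -
  interpret k_parallel_liner X L \<kappa>
    using assms(1,3) by (simp add: k_parallel_liner_def k_parallel_liner_axioms_def liner_space_def)
  show ?thesis
    using ex_fourth_vertex[OF assms(2)] by blast
qed

end
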